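(* Let $I$ be a finite set of players. For each $\nu\in I$ let $X_\nu\subset\mathbb{R}^{n_\nu}$, let $\succeq_\nu$ be a binary relation on $\mathbb{R}^n=\prod_{\nu\in I}\mathbb{R}^{n_\nu}$, and let $K_\nu:X_{-\nu}\rightrightarrows X_\nu$ be a set-valued map, where $X_{-\nu}=\prod_{j\neq\nu}X_j$. Set $X=\prod_{\nu\in I}X_\nu$ and $K(x)=\prod_{\nu\in I}K_\nu(x^{-\nu})$. Assume that for each $\nu\in I$: (1) $K_\nu$ has non-empty, closed and convex values; (2) $U^s_\nu(x)$ is convex for all $x\in\mathbb{R}^n$; (3) $x^\nu\in\operatorname{cl}(U^s_\nu(x))$ for all $x\in\mathbb{R}^n$. Define $N_0:\mathbb{R}^n\rightrightarrows\mathbb{R}^n$ by $N_0(x)=\prod_{\nu\in I}\big(N_\nu(x)\setminus\{0\}\big)$. If $\hat x$ is a generalized Nash equilibrium, then $\hat x$ solves the Stampacchia quasivariational inequality problem associated to $N_0$ and $K$, i.e. $\hat x\in K(\hat x)$ and there exists $\hat x^*\in N_0(\hat x)$ with $\langle\hat x^*,y-\hat x\rangle\ge0$ for all $y\in K(\hat x)$.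
   Context: Vectors $x\in\mathbb{R}^n$ are written $x=(x^\nu,x^{-\nu})$ with $x^\nu\in\mathbb{R}^{n_\nu}$ and $x^{-\nu}$ the components of the other players. For $w^{-\nu}$, the induced relation on $\mathbb{R}^{n_\nu}$ is $x^\nu\succeq_{\nu,w^{-\nu}}y^\nu$ iff $(x^\nu,w^{-\nu})\succeq_\nu(y^\nu,w^{-\nu})$, and $\succ_{\nu,w^{-\nu}}$ denotes its asymmetric part ($a\succ b$ iff $a\succeq b$ and not $b\succeq a$). For $x\in\mathbb{R}^n$, $U^s_\nu(x)=\{y^\nu\in\mathbb{R}^{n_\nu}: y^\nu\succ_{\nu,x^{-\nu}}x^\nu\}$. For $A\subset\mathbb{R}^m$ and $z\in\mathbb{R}^m$ (no convexity, closedness or membership $z\in A$ required), the normal cone is $\mathscr{N}_A(z)=\{z^*\in\mathbb{R}^m:\langle z^*,y-z\rangle\le 0\ \forall y\in A\}$ if $A\neq\emptyset$ and $\mathscr{N}_A(z)=\mathbb{R}^m$ if $A=\emptyset$. Then $N_\nu(x)=\mathscr{N}_{U^s_\nu(x)}(x^\nu)\subset\mathbb{R}^{n_\nu}$. A point $\hat x\in K(\hat x)$ is a generalized Nash equilibrium if for each $\nu\in I$ there is no $x^\nu\in K_\nu(\hat x^{-\nu})$ with $x^\nu\succ_{\nu,\hat x^{-\nu}}\hat x^\nu$. *)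

theory Defs
  imports "HOL-Analysis.Analysis"
begin

text \<open>Player \<nu> has dimension nd \<nu>; a vector of R^(nd \<nu>) is encoded as a function
 nat => real vanishing at all indices >= nd \<nu>.  A point of R^n = prod R^(n_\<nu>)
 is a function 'i => nat => real whose \<nu>-block lies in R^(nd \<nu>) for \<nu> in I
 and which is zero outside I.  (y^\<nu>, x^(-\<nu>)) is x(\<nu> := y).\<close>

definition blk :: "nat \<Rightarrow> (nat \<Rightarrow> real) set" where
  "blk m = {v. \<forall>k\<ge>m. v k = 0}"

definition prof :: "'i set \<Rightarrow> ('i \<Rightarrow> nat) \<Rightarrow> ('i \<Rightarrow> nat \<Rightarrow> real) set" where
  "prof I nd = {x. (\<forall>\<nu>\<in>I. x \<nu> \<in> blk (nd \<nu>)) \<and> (\<forall>\<nu>. \<nu> \<notin> I \<longrightarrow> x \<nu> = (\<lambda>k. 0))}"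

definition ip :: "nat \<Rightarrow> (nat \<Rightarrow> real) \<Rightarrow> (nat \<Rightarrow> real) \<Rightarrow> real" where
  "ip m u v = (\<Sum>k<m. u k * v k)"

definition bdist :: "nat \<Rightarrow> (nat \<Rightarrow> real) \<Rightarrow> (nat \<Rightarrow> real) \<Rightarrow> real" where
  "bdist m u v = sqrt (\<Sum>k<m. (u k - v k)^2)"

definition pip :: "'i set \<Rightarrow> ('i \<Rightarrow> nat) \<Rightarrow> ('i \<Rightarrow> nat \<Rightarrow> real) \<Rightarrow> ('i \<Rightarrow> nat \<Rightarrow> real) \<Rightarrow> real" where
  "pip I nd a b = (\<Sum>\<nu>\<in>I. ip (nd \<nu>) (a \<nu>) (b \<nu>))"

definition bconvex :: "(nat \<Rightarrow> real) set \<Rightarrow> bool" where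
  "bconvex A = (\<forall>x\<in>A. \<forall>y\<in>A. \<forall>t::real. 0 \<le> t \<and> t \<le> 1 \<longrightarrow> (\<lambda>k. (1 - t) * x k + t * y k) \<in> A)"

definition bcl :: "nat \<Rightarrow> (nat \<Rightarrow> real) set \<Rightarrow> (nat \<Rightarrow> real) set" where
  "bcl m A = {z \<in> blk m. \<forall>e>0. \<exists>y\<in>A. bdist m y z < e}"

definition bclosed :: "nat \<Rightarrow> (nat \<Rightarrow> real) set \<Rightarrow> bool" where
  "bclosed m A = (bcl m A \<subseteq> A)"

definition ncone :: "nat \<Rightarrow> (nat \<Rightarrow> real) set \<Rightarrow> (nat \<Rightarrow> real) \<Rightarrow> (nat \<Rightarrow> real) set" where
  "ncone m A z = (if A = {} then blk m
     else {zs \<in> blk m. \<forall>y\<in>A. ip m zs (\<lambda>k. y k - z k) \<le> 0})"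

definition ind_pref :: "('i \<Rightarrow> ('i \<Rightarrow> nat \<Rightarrow> real) \<Rightarrow> ('i \<Rightarrow> nat \<Rightarrow> real) \<Rightarrow> bool)
    \<Rightarrow> 'i \<Rightarrow> ('i \<Rightarrow> nat \<Rightarrow> real) \<Rightarrow> (nat \<Rightarrow> real) \<Rightarrow> (nat \<Rightarrow> real) \<Rightarrow> bool" where
  "ind_pref P \<nu> w a b = P \<nu> (w(\<nu> := a)) (w(\<nu> := b))"

definition strict_pref :: "('i \<Rightarrow> ('i \<Rightarrow> nat \<Rightarrow> real) \<Rightarrow> ('i \<Rightarrow> nat \<Rightarrow> real) \<Rightarrow> bool)
    \<Rightarrow> 'i \<Rightarrow> ('i \<Rightarrow> nat \<Rightarrow> real) \<Rightarrow> (nat \<Rightarrow> real) \<Rightarrow> (nat \<Rightarrow> real) \<Rightarrow> bool" where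
  "strict_pref P \<nu> w a b = (ind_pref P \<nu> w a b \<and> \<not> ind_pref P \<nu> w b a)"

definition Us :: "('i \<Rightarrow> nat) \<Rightarrow> ('i \<Rightarrow> ('i \<Rightarrow> nat \<Rightarrow> real) \<Rightarrow> ('i \<Rightarrow> nat \<Rightarrow> real) \<Rightarrow> bool)
    \<Rightarrow> 'i \<Rightarrow> ('i \<Rightarrow> nat \<Rightarrow> real) \<Rightarrow> (nat \<Rightarrow> real) set" where
  "Us nd P \<nu> x = {y \<in> blk (nd \<nu>). strict_pref P \<nu> x y (x \<nu>)}"

definition Nnu :: "('i \<Rightarrow> nat) \<Rightarrow> ('i \<Rightarrow> ('i \<Rightarrow> nat \<Rightarrow> real) \<Rightarrow> ('i \<Rightarrow> nat \<Rightarrow> real) \<Rightarrow> bool)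
    \<Rightarrow> 'i \<Rightarrow> ('i \<Rightarrow> nat \<Rightarrow> real) \<Rightarrow> (nat \<Rightarrow> real) set" where
  "Nnu nd P \<nu> x = ncone (nd \<nu>) (Us nd P \<nu> x) (x \<nu>)"

definition N0 :: "'i set \<Rightarrow> ('i \<Rightarrow> nat) \<Rightarrow> ('i \<Rightarrow> ('i \<Rightarrow> nat \<Rightarrow> real) \<Rightarrow> ('i \<Rightarrow> nat \<Rightarrow> real) \<Rightarrow> bool)
    \<Rightarrow> ('i \<Rightarrow> nat \<Rightarrow> real) \<Rightarrow> ('i \<Rightarrow> nat \<Rightarrow> real) set" where
  "N0 I nd P x = {xs \<in> prof I nd. \<forall>\<nu>\<in>I. xs \<nu> \<in> Nnu nd P \<nu> x - {(\<lambda>k. 0)}}"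

text \<open>X_{-\<nu>}: profiles whose components j \<noteq> \<nu> lie in X_j (the \<nu>-component is ignored).\<close>
definition Xminus :: "'i set \<Rightarrow> ('i \<Rightarrow> nat) \<Rightarrow> ('i \<Rightarrow> (nat \<Rightarrow> real) set) \<Rightarrow> 'i \<Rightarrow> ('i \<Rightarrow> nat \<Rightarrow> real) set" where
  "Xminus I nd X \<nu> = {w \<in> prof I nd. \<forall>j\<in>I - {\<nu>}. w j \<in> X j}"

text \<open>K(x) = prod_\<nu> K_\<nu>(x^(-\<nu>)); K \<nu> x depends only on the components j \<noteq> \<nu> of x.\<close>
definition Kprod :: "'i set \<Rightarrow> ('i \<Rightarrow> nat) \<Rightarrow> ('i \<Rightarrow> ('i \<Rightarrow> nat \<Rightarrow> real) \<Rightarrow> (nat \<Rightarrow> real) set)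
    \<Rightarrow> ('i \<Rightarrow> nat \<Rightarrow> real) \<Rightarrow> ('i \<Rightarrow> nat \<Rightarrow> real) set" where
  "Kprod I nd K x = {y \<in> prof I nd. \<forall>\<nu>\<in>I. y \<nu> \<in> K \<nu> x}"

definition is_GNE where
  "is_GNE I nd X P K xh \<longleftrightarrow>
     (\<forall>\<nu>\<in>I. xh \<in> Xminus I nd X \<nu>) \<and> xh \<in> Kprod I nd K xh \<and>
     (\<forall>\<nu>\<in>I. \<not> (\<exists>y\<in>K \<nu> xh. strict_pref P \<nu> xh y (xh \<nu>)))"

end

theory Submission
  imports Defs
begin

text \<open>
  At a generalized Nash equilibrium \<open>x\<close> no strategy in \<open>K\<^sub>\<nu>(x)\<close> is strictly preferred by
  player \<open>\<nu>\<close>, so the convex sets \<open>U\<^sup>s\<^sub>\<nu>(x)\<close> and \<open>K\<^sub>\<nu>(x)\<close> are disjoint, while \<open>x\<^sup>\<nu>\<close> lies in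
  the second and in the closure of the first. A nonzero vector separating them is a nonzero
  element of \<open>N\<^sub>\<nu>(x)\<close> with nonnegative inner product against \<open>K\<^sub>\<nu>(x) - x\<^sup>\<nu>\<close>; these vectors,
  one per player, form the required element of \<open>N\<^sub>0(x)\<close>.

  The dimensions \<open>n\<^sub>\<nu>\<close> are numbers rather than types, so the separation theorems of
  HOL-Analysis do not apply and separation is proved here for the coordinate encoding. A
  convex set missing \<open>0\<close> generates a convex cone that is not the whole space. By induction on
  the dimension, either the projection of the cone forgetting the last coordinate is again
  proper, or the cone absorbs every point along a direction \<open>d = \<plusminus>e\<close> (\<open>e\<close> the last unit
  vector) with \<open>-d\<close> outside the cone. In the second case the gauge
  \<open>x \<mapsto> inf {t. x + t d \<in> K}\<close> is finite and sublinear; a linear minorant of it, obtained by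
  extending one coordinate at a time as in the Hahn-Banach theorem, is \<open>\<le> 0\<close> on the cone and
  \<open>\<le> -1\<close> at \<open>d\<close>, hence its negative is the separating vector.
\<close>

lemma ip_Suc: "ip (Suc n) a b = ip n a b + a n * b n"
  by (simp add: ip_def)

lemma ip_cong:
  "(\<And>k. k < n \<Longrightarrow> a k = a' k) \<Longrightarrow> (\<And>k. k < n \<Longrightarrow> b k = b' k) \<Longrightarrow> ip n a b = ip n a' b'"
  unfolding ip_def by (rule sum.cong) auto

lemma ip_add_right: "ip n a (\<lambda>k. x k + y k) = ip n a x + ip n a y"
  unfolding ip_def by (simp add: distrib_left sum.distrib)

lemma ip_diff_right: "ip n a (\<lambda>k. x k - y k) = ip n a x - ip n a y"
  unfolding ip_def by (simp add: right_diff_distrib sum_subtractf)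

lemma ip_scale_right: "ip n a (\<lambda>k. t * x k) = t * ip n a x"
  unfolding ip_def by (simp add: sum_distrib_left algebra_simps)

lemma ip_minus_left: "ip n (\<lambda>k. - a k) x = - ip n a x"
  unfolding ip_def by (simp add: sum_negf)

lemma ip_zero_left [simp]: "ip n (\<lambda>k. 0) x = 0"
  by (simp add: ip_def)

lemma zero_in_blk [simp]: "(\<lambda>k. 0) \<in> blk m"
  by (simp add: blk_def)

lemma blk_mono: "k \<le> n \<Longrightarrow> blk k \<subseteq> blk n"
  by (auto simp: blk_def)

lemma blk_0: "blk 0 = {\<lambda>k. 0}"
  by (auto simp: blk_def)

lemma exists_real_between:
  fixes A B :: "real set"
  assumes "A \<noteq> {}" "B \<noteq> {}" "\<And>a b. a \<in> A \<Longrightarrow> b \<in> B \<Longrightarrow> a \<le> b"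
  obtains c where "\<And>a. a \<in> A \<Longrightarrow> a \<le> c" "\<And>b. b \<in> B \<Longrightarrow> c \<le> b"
proof
  have "bdd_above A"
    using assms by (meson bdd_aboveI ex_in_conv)
  then show "a \<le> Sup A" if "a \<in> A" for a
    using that by (intro cSup_upper)
  show "Sup A \<le> b" if "b \<in> B" for b
    using assms that by (intro cSup_least) auto
qed

context
  fixes g :: "(nat \<Rightarrow> real) \<Rightarrow> real" and n :: nat
  assumes subadd: "\<And>x y. x \<in> blk n \<Longrightarrow> y \<in> blk n \<Longrightarrow> g (\<lambda>j. x j + y j) \<le> g x + g y"
    and pos_homogeneous: "\<And>x t. x \<in> blk n \<Longrightarrow> t > 0 \<Longrightarrow> g (\<lambda>j. t * x j) = t * g x"
begin

lemma linear_minorant_extend_by_bounds: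
  fixes L :: "nat \<Rightarrow> real" and c :: real and k :: nat
  defines "e \<equiv> \<lambda>j. if j = k then 1 else 0"
  assumes "k < n" and L: "\<And>x. x \<in> blk k \<Longrightarrow> ip k L x \<le> g x"
    and lower: "\<And>w. w \<in> blk k \<Longrightarrow> ip k L w - g (\<lambda>j. w j - e j) \<le> c"
    and upper: "\<And>u. u \<in> blk k \<Longrightarrow> c \<le> g (\<lambda>j. u j + e j) - ip k L u"
    and x: "x \<in> blk (Suc k)"
  shows "ip (Suc k) (L(k := c)) x \<le> g x"
proof -
  define v where "v = x(k := 0)"
  define t where "t = x k"
  have v: "v \<in> blk k"
    using x by (auto simp: v_def blk_def)
  have "ip (Suc k) (L(k := c)) x = ip k L v + c * t"
    by (simp add: ip_Suc t_def v_def cong: ip_cong)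
  moreover have "ip k L v + c * t \<le> g x"
  proof (cases t "0::real" rule: linorder_cases)
    case less
    define w where "w = (\<lambda>j. v j / - t)"
    have w: "w \<in> blk k" and we: "(\<lambda>j. w j - e j) \<in> blk n"
      using v \<open>k < n\<close> by (auto simp: w_def e_def blk_def)
    have x_eq: "x = (\<lambda>j. - t * (w j - e j))"
      using less by (auto simp: w_def e_def v_def t_def)
    have "- t * (ip k L w - g (\<lambda>j. w j - e j)) \<le> - t * c"
      using lower[OF w] less by (intro mult_left_mono) auto
    then show ?thesis
      using pos_homogeneous[OF we, of "- t"] less
      by (simp add: x_eq w_def ip_scale_right[of k L "1 / - t" v, simplified] algebra_simps)
  next
    case equal
    then have "x = v"
      by (auto simp: v_def t_def)
    then show ?thesis
      using equal L v by simp
  next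
    case greater
    define u where "u = (\<lambda>j. v j / t)"
    have u: "u \<in> blk k" and ue: "(\<lambda>j. u j + e j) \<in> blk n"
      using v \<open>k < n\<close> by (auto simp: u_def e_def blk_def)
    have x_eq: "x = (\<lambda>j. t * (u j + e j))"
      using greater by (auto simp: u_def e_def v_def t_def)
    have "t * c \<le> t * (g (\<lambda>j. u j + e j) - ip k L u)"
      using upper[OF u] greater by (intro mult_left_mono) auto
    then show ?thesis
      using pos_homogeneous[OF ue greater] greater
      by (simp add: x_eq u_def ip_scale_right[of k L "1 / t" v, simplified] algebra_simps)
  qed
  ultimately show ?thesis
    by simp
qed

lemma linear_minorant_extend:
  assumes "k < n" and L: "L \<in> blk k" "\<And>x. x \<in> blk k \<Longrightarrow> ip k L x \<le> g x"
  shows "\<exists>L'\<in>blk (Suc k). \<forall>x\<in>blk (Suc k). ip (Suc k) L' x \<le> g x"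
proof -
  define e where "e = (\<lambda>j::nat. if j = k then 1 else (0::real))"
  have gap: "ip k L w - g (\<lambda>j. w j - e j) \<le> g (\<lambda>j. u j + e j) - ip k L u"
    if w: "w \<in> blk k" and u: "u \<in> blk k" for w u
  proof -
    have "(\<lambda>j. w j - e j) \<in> blk n" "(\<lambda>j. u j + e j) \<in> blk n"
      using w u \<open>k < n\<close> by (auto simp: e_def blk_def)
    from subadd[OF this] have "g (\<lambda>j. w j + u j) \<le> g (\<lambda>j. w j - e j) + g (\<lambda>j. u j + e j)"
      by simp
    moreover have "ip k L w + ip k L u \<le> g (\<lambda>j. w j + u j)"
      using L(2)[of "\<lambda>j. w j + u j"] w u by (auto simp: ip_add_right blk_def)
    ultimately show ?thesis
      by simp
  qed
  define A where "A = {ip k L w - g (\<lambda>j. w j - e j) |w. w \<in> blk k}"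
  define B where "B = {g (\<lambda>j. u j + e j) - ip k L u |u. u \<in> blk k}"
  have "A \<noteq> {}" "B \<noteq> {}"
    using zero_in_blk unfolding A_def B_def by blast+
  moreover have "a \<le> b" if "a \<in> A" "b \<in> B" for a b
    using gap that unfolding A_def B_def by blast
  ultimately obtain c where "\<And>a. a \<in> A \<Longrightarrow> a \<le> c" "\<And>b. b \<in> B \<Longrightarrow> c \<le> b"
    using exists_real_between[of A B] by blast
  then have lower: "\<And>w. w \<in> blk k \<Longrightarrow> ip k L w - g (\<lambda>j. w j - e j) \<le> c"
    and upper: "\<And>u. u \<in> blk k \<Longrightarrow> c \<le> g (\<lambda>j. u j + e j) - ip k L u"
    unfolding A_def B_def by blast+
  have "L(k := c) \<in> blk (Suc k)"
    using \<open>L \<in> blk k\<close> by (auto simp: blk_def)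
  moreover have "ip (Suc k) (L(k := c)) x \<le> g x" if "x \<in> blk (Suc k)" for x
    using linear_minorant_extend_by_bounds[OF \<open>k < n\<close> L(2)
        lower[unfolded e_def] upper[unfolded e_def] that] .
  ultimately show ?thesis
    by blast
qed

lemma sublinear_has_linear_minorant: "\<exists>L\<in>blk n. \<forall>x\<in>blk n. ip n L x \<le> g x"
proof -
  have "g (\<lambda>j. 2 * 0) = 2 * g (\<lambda>j. 0)"
    by (rule pos_homogeneous) auto
  then have g0: "g (\<lambda>j. 0) = 0"
    by simp
  have "\<exists>L\<in>blk k. \<forall>x\<in>blk k. ip k L x \<le> g x" if "k \<le> n" for k
    using that
  proof (induction k)
    case 0
    show ?case
      by (simp add: blk_0 ip_def g0)
  next
    case (Suc k)
    then obtain L where "L \<in> blk k" "\<forall>x\<in>blk k. ip k L x \<le> g x"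
      by auto
    then show ?case
      using linear_minorant_extend[of k L] Suc.prems by simp
  qed
  then show ?thesis
    by blast
qed

end

definition bcone :: "(nat \<Rightarrow> real) set \<Rightarrow> bool" where
  "bcone K \<longleftrightarrow> (\<forall>x\<in>K. \<forall>y\<in>K. (\<lambda>k. x k + y k) \<in> K) \<and> (\<forall>x\<in>K. \<forall>t\<ge>0. (\<lambda>k. t * x k) \<in> K)"

lemma bcone_add: "bcone K \<Longrightarrow> x \<in> K \<Longrightarrow> y \<in> K \<Longrightarrow> (\<lambda>k. x k + y k) \<in> K"
  by (simp add: bcone_def)

lemma bcone_scale: "bcone K \<Longrightarrow> x \<in> K \<Longrightarrow> 0 \<le> t \<Longrightarrow> (\<lambda>k. t * x k) \<in> K"
  by (simp add: bcone_def)

lemma bcone_zero: "bcone K \<Longrightarrow> K \<noteq> {} \<Longrightarrow> (\<lambda>k. 0) \<in> K"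
  using bcone_scale[of K _ 0] by auto

locale absorbing_cone =
  fixes m :: nat and K :: "(nat \<Rightarrow> real) set" and d :: "nat \<Rightarrow> real"
  assumes K_blk: "K \<subseteq> blk m" and K_nonempty: "K \<noteq> {}" and cone: "bcone K"
    and d_blk: "d \<in> blk m"
    and absorbing: "\<And>x. x \<in> blk m \<Longrightarrow> \<exists>t. (\<lambda>k. x k + t * d k) \<in> K"
    and minus_d_notin: "(\<lambda>k. - d k) \<notin> K"
begin

definition shifts :: "(nat \<Rightarrow> real) \<Rightarrow> real set" where
  "shifts x = {t. (\<lambda>k. x k + t * d k) \<in> K}"

definition gauge :: "(nat \<Rightarrow> real) \<Rightarrow> real" where
  "gauge x = Inf (shifts x)"

lemma shifts_add:
  assumes "a \<in> shifts x" "b \<in> shifts y"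
  shows "a + b \<in> shifts (\<lambda>k. x k + y k)"
proof -
  have "(\<lambda>k. (x k + a * d k) + (y k + b * d k)) \<in> K"
    using assms bcone_add[OF cone] by (simp add: shifts_def)
  then show ?thesis
    by (simp add: shifts_def algebra_simps)
qed

lemma shifts_scale:
  assumes "a \<in> shifts x" "0 \<le> t"
  shows "t * a \<in> shifts (\<lambda>k. t * x k)"
proof -
  have "(\<lambda>k. t * (x k + a * d k)) \<in> K"
    using assms bcone_scale[OF cone] by (simp add: shifts_def)
  then show ?thesis
    by (simp add: shifts_def algebra_simps)
qed

lemma shifts_zero_nonneg:
  assumes "t \<in> shifts (\<lambda>k. 0)"
  shows "0 \<le> t"
proof (rule ccontr)
  assume "\<not> 0 \<le> t"
  have "(\<lambda>k. t * d k) \<in> K"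
    using assms by (simp add: shifts_def)
  then have "(\<lambda>k. (- 1 / t) * (t * d k)) \<in> K"
    by (rule bcone_scale[OF cone]) (use \<open>\<not> 0 \<le> t\<close> in simp)
  moreover have "(\<lambda>k. (- 1 / t) * (t * d k)) = (\<lambda>k. - d k)"
    using \<open>\<not> 0 \<le> t\<close> by auto
  ultimately show False
    using minus_d_notin by simp
qed

lemma shifts_nonempty: "x \<in> blk m \<Longrightarrow> shifts x \<noteq> {}"
  using absorbing by (auto simp: shifts_def)

lemma shifts_bdd_below:
  assumes "x \<in> blk m"
  shows "bdd_below (shifts x)"
proof -
  obtain b where b: "b \<in> shifts (\<lambda>k. - x k)"
    using shifts_nonempty[of "\<lambda>k. - x k"] assms by (auto simp: blk_def)
  have "- b \<le> a" if "a \<in> shifts x" for a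
  proof -
    have "a + b \<in> shifts (\<lambda>k. x k + - x k)"
      using shifts_add[OF that b] .
    then show ?thesis
      using shifts_zero_nonneg by fastforce
  qed
  then show ?thesis
    by (rule bdd_belowI)
qed

lemma gauge_le: "x \<in> blk m \<Longrightarrow> a \<in> shifts x \<Longrightarrow> gauge x \<le> a"
  unfolding gauge_def by (intro cInf_lower shifts_bdd_below)

lemma le_gauge: "x \<in> blk m \<Longrightarrow> (\<And>a. a \<in> shifts x \<Longrightarrow> b \<le> a) \<Longrightarrow> b \<le> gauge x"
  unfolding gauge_def by (intro cInf_greatest shifts_nonempty)

lemma gauge_subadditive:
  assumes x: "x \<in> blk m" and y: "y \<in> blk m"
  shows "gauge (\<lambda>k. x k + y k) \<le> gauge x + gauge y"
proof -
  have xy: "(\<lambda>k. x k + y k) \<in> blk m"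
    using x y by (auto simp: blk_def)
  have "gauge (\<lambda>k. x k + y k) - gauge y \<le> a" if a: "a \<in> shifts x" for a
  proof -
    have "gauge (\<lambda>k. x k + y k) - a \<le> b" if "b \<in> shifts y" for b
      using gauge_le[OF xy shifts_add[OF a that]] by simp
    then have "gauge (\<lambda>k. x k + y k) - a \<le> gauge y"
      by (rule le_gauge[OF y])
    then show ?thesis
      by simp
  qed
  then have "gauge (\<lambda>k. x k + y k) - gauge y \<le> gauge x"
    by (rule le_gauge[OF x])
  then show ?thesis
    by simp
qed

lemma gauge_pos_homogeneous:
  assumes x: "x \<in> blk m" and t: "0 < t"
  shows "gauge (\<lambda>k. t * x k) = t * gauge x"
proof (rule antisym)
  have tx: "(\<lambda>k. t * x k) \<in> blk m"
    using x by (auto simp: blk_def)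
  show "gauge (\<lambda>k. t * x k) \<le> t * gauge x"
  proof -
    have "gauge (\<lambda>k. t * x k) / t \<le> a" if "a \<in> shifts x" for a
      using gauge_le[OF tx shifts_scale[OF that]] t by (simp add: divide_le_eq mult.commute)
    then have "gauge (\<lambda>k. t * x k) / t \<le> gauge x"
      by (rule le_gauge[OF x])
    then show ?thesis
      using t by (simp add: divide_le_eq mult.commute)
  qed
  show "t * gauge x \<le> gauge (\<lambda>k. t * x k)"
  proof -
    have "gauge x \<le> b / t" if "b \<in> shifts (\<lambda>k. t * x k)" for b
      using gauge_le[OF x] shifts_scale[OF that, of "1 / t"] t by simp
    then show ?thesis
      using le_gauge[OF tx] t by (simp add: le_divide_eq mult.commute)
  qed
qed

lemma dual_vector_exists: "\<exists>z\<in>blk m. z \<noteq> (\<lambda>k. 0) \<and> (\<forall>c\<in>K. 0 \<le> ip m z c)"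
proof -
  obtain L where L: "L \<in> blk m" "\<And>x. x \<in> blk m \<Longrightarrow> ip m L x \<le> gauge x"
    using sublinear_has_linear_minorant[where g = gauge and n = m] gauge_subadditive gauge_pos_homogeneous
    by blast
  define z where "z = (\<lambda>k. - L k)"
  have "z \<in> blk m"
    using L(1) by (auto simp: z_def blk_def)
  moreover have "0 \<le> ip m z c" if "c \<in> K" for c
    using L(2)[of c] gauge_le[of c 0] that K_blk by (auto simp: z_def ip_minus_left shifts_def)
  moreover have "1 \<le> ip m z d"
    using L(2)[OF d_blk] gauge_le[OF d_blk, of "- 1"] bcone_zero[OF cone K_nonempty]
    by (simp add: z_def ip_minus_left shifts_def)
  then have "z \<noteq> (\<lambda>k. 0)"
    by auto
  ultimately show ?thesis
    by blast
qed

end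

lemma bcone_truncate:
  assumes "bcone K"
  shows "bcone ((\<lambda>c. c(n := 0)) ` K)"
  unfolding bcone_def
proof (intro conjI ballI allI impI)
  fix x y assume "x \<in> (\<lambda>c. c(n := 0)) ` K" "y \<in> (\<lambda>c. c(n := 0)) ` K"
  then obtain a b where "a \<in> K" "b \<in> K" "x = a(n := 0)" "y = b(n := 0)"
    by blast
  moreover have "(\<lambda>k. a k + b k) \<in> K"
    using bcone_add[OF assms \<open>a \<in> K\<close> \<open>b \<in> K\<close>] .
  ultimately show "(\<lambda>k. x k + y k) \<in> (\<lambda>c. c(n := 0)) ` K"
    by (intro image_eqI[of _ _ "\<lambda>k. a k + b k"]) auto
next
  fix x and t :: real assume "x \<in> (\<lambda>c. c(n := 0)) ` K" "0 \<le> t"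
  then obtain a where "a \<in> K" "x = a(n := 0)"
    by blast
  moreover have "(\<lambda>k. t * a k) \<in> K"
    using bcone_scale[OF assms \<open>a \<in> K\<close> \<open>0 \<le> t\<close>] .
  ultimately show "(\<lambda>k. t * x k) \<in> (\<lambda>c. c(n := 0)) ` K"
    by (intro image_eqI[of _ _ "\<lambda>k. t * a k"]) auto
qed

lemma ip_Suc_truncate: "z \<in> blk n \<Longrightarrow> ip (Suc n) z c = ip n z (c(n := 0))"
  by (auto simp: ip_Suc blk_def intro: ip_cong)

lemma bcone_dual_vector_onto:
  assumes K: "K \<subseteq> blk (Suc n)" "K \<noteq> {}" "bcone K" and w: "w \<in> blk (Suc n)" "w \<notin> K"
    and onto: "blk n \<subseteq> (\<lambda>c. c(n := 0)) ` K"
  shows "\<exists>z\<in>blk (Suc n). z \<noteq> (\<lambda>k. 0) \<and> (\<forall>c\<in>K. 0 \<le> ip (Suc n) z c)"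
proof -
  define e where "e \<sigma> = (\<lambda>k. if k = n then \<sigma> else (0::real))" for \<sigma>
  have absorbing: "\<exists>t. (\<lambda>k. x k + t * e \<sigma> k) \<in> K" if "x \<in> blk (Suc n)" "\<sigma> \<noteq> 0" for x \<sigma>
  proof -
    have "x(n := 0) \<in> blk n"
      using that by (auto simp: blk_def)
    then obtain c where c: "c \<in> K" "c(n := 0) = x(n := 0)"
      using onto by force
    have "(\<lambda>k. x k + ((c n - x n) / \<sigma>) * e \<sigma> k) = c"
    proof
      fix k
      show "x k + ((c n - x n) / \<sigma>) * e \<sigma> k = c k"
        using fun_cong[OF c(2), of k] \<open>\<sigma> \<noteq> 0\<close> by (cases "k = n") (auto simp: e_def)
    qed
    then show ?thesis
      using c(1) by metis
  qed
  have "e 1 \<notin> K \<or> e (- 1) \<notin> K"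
  proof (rule ccontr)
    assume "\<not> ?thesis"
    then have e: "e 1 \<in> K" "e (- 1) \<in> K"
      by auto
    obtain t where t: "(\<lambda>k. w k + t * e 1 k) \<in> K"
      using absorbing[OF w(1), of 1] by auto
    have "(\<lambda>k. - t * e 1 k) \<in> K"
    proof (cases "t \<le> 0")
      case True
      then show ?thesis
        using bcone_scale[OF K(3) e(1), of "- t"] by simp
    next
      case False
      moreover have "(\<lambda>k. t * e (- 1) k) = (\<lambda>k. - t * e 1 k)"
        by (auto simp: e_def)
      ultimately show ?thesis
        using bcone_scale[OF K(3) e(2), of t] by simp
    qed
    from bcone_add[OF K(3) t this] show False
      using w(2) by simp
  qed
  then obtain \<sigma> :: real where "\<sigma> \<noteq> 0" "e (- \<sigma>) \<notin> K"
  proof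
    assume "e 1 \<notin> K"
    then show thesis
      using that[of "- 1"] by simp
  next
    assume "e (- 1) \<notin> K"
    then show thesis
      using that[of 1] by simp
  qed
  moreover have "(\<lambda>k. - e \<sigma> k) = e (- \<sigma>)"
    by (auto simp: e_def)
  moreover have "e \<sigma> \<in> blk (Suc n)"
    by (simp add: e_def blk_def)
  ultimately interpret absorbing_cone "Suc n" K "e \<sigma>"
    using K absorbing by unfold_locales simp_all
  show ?thesis
    by (rule dual_vector_exists)
qed

lemma bcone_dual_vector:
  assumes "K \<subseteq> blk n" "K \<noteq> {}" "bcone K" "w \<in> blk n" "w \<notin> K"
  shows "\<exists>z\<in>blk n. z \<noteq> (\<lambda>k. 0) \<and> (\<forall>c\<in>K. 0 \<le> ip n z c)"
  using assms
proof (induction n arbitrary: K w)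
  case 0
  then show ?case
    using bcone_zero by (auto simp: blk_0)
next
  case (Suc n)
  show ?case
  proof (cases "blk n \<subseteq> (\<lambda>c. c(n := 0)) ` K")
    case True
    then show ?thesis
      using bcone_dual_vector_onto Suc.prems by blast
  next
    case False
    then obtain w' where w': "w' \<in> blk n" "w' \<notin> (\<lambda>c. c(n := 0)) ` K"
      by auto
    have "(\<lambda>c. c(n := 0)) ` K \<subseteq> blk n"
      using Suc.prems(1) by (auto simp: blk_def)
    moreover have "(\<lambda>c. c(n := 0)) ` K \<noteq> {}"
      using Suc.prems(2) by simp
    moreover have "bcone ((\<lambda>c. c(n := 0)) ` K)"
      using Suc.prems(3) by (rule bcone_truncate)
    ultimately obtain z where z: "z \<in> blk n" "z \<noteq> (\<lambda>k. 0)"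
      "\<forall>c\<in>(\<lambda>c. c(n := 0)) ` K. 0 \<le> ip n z c"
      using Suc.IH[OF _ _ _ w'] by blast
    have "0 \<le> ip (Suc n) z c" if "c \<in> K" for c
      using z(3) that by (simp add: ip_Suc_truncate[OF z(1)])
    moreover have "z \<in> blk (Suc n)"
      using z(1) blk_mono[of n "Suc n"] by auto
    ultimately show ?thesis
      using z(2) by blast
  qed
qed

lemma bcone_scaled_bconvex:
  assumes "bconvex C"
  shows "bcone {(\<lambda>k. t * c k) |t c. 0 \<le> t \<and> c \<in> C}"
  unfolding bcone_def
proof (intro conjI ballI allI impI)
  fix x y assume "x \<in> {(\<lambda>k. t * c k) |t c. 0 \<le> t \<and> c \<in> C}" "y \<in> {(\<lambda>k. t * c k) |t c. 0 \<le> t \<and> c \<in> C}"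
  then obtain t a s b where ta: "0 \<le> t" "a \<in> C" "x = (\<lambda>k. t * a k)"
    and sb: "0 \<le> s" "b \<in> C" "y = (\<lambda>k. s * b k)"
    by blast
  show "(\<lambda>k. x k + y k) \<in> {(\<lambda>k. t * c k) |t c. 0 \<le> t \<and> c \<in> C}"
  proof (cases "t + s = 0")
    case True
    then have "t = 0" "s = 0"
      using ta(1) sb(1) by linarith+
    then have "(\<lambda>k. x k + y k) = (\<lambda>k. 0 * a k)"
      using ta(3) sb(3) by simp
    then show ?thesis
      using ta by blast
  next
    case False
    define r where "r = s / (t + s)"
    have r: "0 \<le> r" "r \<le> 1"
      using ta sb False by (auto simp: r_def)
    have "(\<lambda>k. (1 - r) * a k + r * b k) \<in> C"
      using assms ta sb r unfolding bconvex_def by blast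
    moreover have "(t + s) * (1 - r) = t" "(t + s) * r = s"
      using False by (simp_all add: r_def field_simps)
    then have "(\<lambda>k. x k + y k) = (\<lambda>k. (t + s) * ((1 - r) * a k + r * b k))"
      using ta(3) sb(3) by (simp add: distrib_left flip: mult.assoc)
    ultimately show ?thesis
      using ta sb by fastforce
  qed
next
  fix x and r :: real assume "x \<in> {(\<lambda>k. t * c k) |t c. 0 \<le> t \<and> c \<in> C}" "0 \<le> r"
  then obtain t a where "0 \<le> t" "a \<in> C" "x = (\<lambda>k. t * a k)"
    by blast
  moreover have "(\<lambda>k. r * (t * a k)) = (\<lambda>k. (r * t) * a k)"
    by (simp add: mult.assoc)
  ultimately show "(\<lambda>k. r * x k) \<in> {(\<lambda>k. t * c k) |t c. 0 \<le> t \<and> c \<in> C}"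
    using \<open>0 \<le> r\<close> by fastforce
qed

lemma bconvex_dual_vector:
  assumes C: "C \<subseteq> blk n" "C \<noteq> {}" "bconvex C" and zero_notin: "(\<lambda>k. 0) \<notin> C"
  shows "\<exists>z\<in>blk n. z \<noteq> (\<lambda>k. 0) \<and> (\<forall>c\<in>C. 0 \<le> ip n z c)"
proof -
  define K where "K = {(\<lambda>k. t * c k) |t c. 0 \<le> t \<and> c \<in> C}"
  obtain c0 where c0: "c0 \<in> C"
    using C(2) by blast
  have C_K: "C \<subseteq> K"
    unfolding K_def by (force intro: exI[of _ 1])
  have "(\<lambda>k. - c0 k) \<notin> K"
  proof
    assume "(\<lambda>k. - c0 k) \<in> K"
    then obtain t a where ta: "0 \<le> t" "a \<in> C" "(\<lambda>k. - c0 k) = (\<lambda>k. t * a k)"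
      unfolding K_def by blast
    define r where "r = t / (1 + t)"
    have "0 \<le> r" "r \<le> 1"
      using ta(1) by (auto simp: r_def)
    then have "(\<lambda>k. (1 - r) * c0 k + r * a k) \<in> C"
      using C(3) c0 ta(2) unfolding bconvex_def by blast
    moreover have "(\<lambda>k. (1 - r) * c0 k + r * a k) = (\<lambda>k. 0)"
    proof
      fix k
      have "c0 k = - t * a k"
        using fun_cong[OF ta(3), of k] by simp
      then show "(1 - r) * c0 k + r * a k = 0"
        using ta(1) by (simp add: r_def field_simps)
    qed
    ultimately show False
      using zero_notin by simp
  qed
  moreover have "K \<subseteq> blk n" "(\<lambda>k. - c0 k) \<in> blk n"
    using C(1) c0 by (auto simp: K_def blk_def)
  moreover have "bcone K"
    unfolding K_def using C(3) by (rule bcone_scaled_bconvex)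
  ultimately obtain z where "z \<in> blk n" "z \<noteq> (\<lambda>k. 0)" "\<forall>c\<in>K. 0 \<le> ip n z c"
    using bcone_dual_vector[of K n] C_K C(2) by blast
  then show ?thesis
    using C_K by blast
qed

lemma bconvex_differences:
  assumes "bconvex A" "bconvex B"
  shows "bconvex {(\<lambda>k. a k - b k) |a b. a \<in> A \<and> b \<in> B}"
  unfolding bconvex_def
proof (intro ballI allI impI)
  fix x y and t :: real
  assume "x \<in> {(\<lambda>k. a k - b k) |a b. a \<in> A \<and> b \<in> B}" "y \<in> {(\<lambda>k. a k - b k) |a b. a \<in> A \<and> b \<in> B}"
    and t: "0 \<le> t \<and> t \<le> 1"
  then obtain a b a' b' where ab: "a \<in> A" "b \<in> B" "x = (\<lambda>k. a k - b k)"
    and ab': "a' \<in> A" "b' \<in> B" "y = (\<lambda>k. a' k - b' k)"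
    by blast
  have "(\<lambda>k. (1 - t) * a k + t * a' k) \<in> A" "(\<lambda>k. (1 - t) * b k + t * b' k) \<in> B"
    using assms ab ab' t unfolding bconvex_def by blast+
  moreover have "(\<lambda>k. (1 - t) * x k + t * y k)
      = (\<lambda>k. ((1 - t) * a k + t * a' k) - ((1 - t) * b k + t * b' k))"
    using ab ab' by (auto simp: algebra_simps)
  ultimately show "(\<lambda>k. (1 - t) * x k + t * y k) \<in> {(\<lambda>k. a k - b k) |a b. a \<in> A \<and> b \<in> B}"
    by (intro CollectI exI[of _ "\<lambda>k. (1 - t) * a k + t * a' k"] exI[of _ "\<lambda>k. (1 - t) * b k + t * b' k"])
      simp
qed

lemma bdist_nonneg: "0 \<le> bdist m u x"
  by (simp add: bdist_def sum_nonneg)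

lemma ip_diff_le_bdist: "\<bar>ip m z u - ip m z x\<bar> \<le> (\<Sum>j<m. \<bar>z j\<bar>) * bdist m u x"
proof -
  have coordinate: "\<bar>u j - x j\<bar> \<le> bdist m u x" if "j < m" for j
  proof -
    have "(u j - x j)\<^sup>2 \<le> (\<Sum>k<m. (u k - x k)\<^sup>2)"
      using that by (intro member_le_sum) auto
    then have "sqrt ((u j - x j)\<^sup>2) \<le> bdist m u x"
      unfolding bdist_def by (rule real_sqrt_le_mono)
    then show ?thesis
      by simp
  qed
  have "\<bar>ip m z u - ip m z x\<bar> = \<bar>\<Sum>j<m. z j * (u j - x j)\<bar>"
    by (simp add: ip_def sum_subtractf right_diff_distrib)
  also have "\<dots> \<le> (\<Sum>j<m. \<bar>z j\<bar> * \<bar>u j - x j\<bar>)"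
    by (rule order_trans[OF sum_abs]) (simp add: abs_mult)
  also have "\<dots> \<le> (\<Sum>j<m. \<bar>z j\<bar> * bdist m u x)"
    by (intro sum_mono mult_left_mono coordinate) auto
  finally show ?thesis
    by (simp add: sum_distrib_right)
qed

lemma ip_bounded_on_bcl:
  assumes x: "x \<in> bcl m U" and bound: "\<And>u. u \<in> U \<Longrightarrow> ip m z u \<le> a"
  shows "ip m z x \<le> a"
proof (rule ccontr)
  assume "\<not> ip m z x \<le> a"
  define \<delta> where "\<delta> = ip m z x - a"
  define M where "M = (\<Sum>j<m. \<bar>z j\<bar>) + 1"
  have "0 < \<delta>" "0 < M"
    using \<open>\<not> ip m z x \<le> a\<close> by (auto simp: \<delta>_def M_def add_nonneg_pos sum_nonneg)
  then obtain u where u: "u \<in> U" "bdist m u x < \<delta> / M"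
    using x unfolding bcl_def by (auto dest!: spec[of _ "\<delta> / M"])
  have "\<bar>ip m z u - ip m z x\<bar> \<le> M * bdist m u x"
    using ip_diff_le_bdist[of m z u x] bdist_nonneg[of m u x] by (simp add: M_def distrib_right)
  also have "\<dots> < \<delta>"
    using u(2) \<open>0 < M\<close> by (simp add: pos_less_divide_eq mult.commute)
  finally show False
    using bound[OF u(1)] by (simp add: \<delta>_def)
qed

lemma ncone_subset_blk: "ncone m A z \<subseteq> blk m"
  by (auto simp: ncone_def)

lemma normal_vector_separating_closure_point:
  assumes U: "U \<subseteq> blk m" "bconvex U" "x \<in> bcl m U"
    and V: "V \<subseteq> blk m" "bconvex V" "x \<in> V" and disjoint: "U \<inter> V = {}"
  shows "\<exists>z\<in>ncone m U x - {\<lambda>k. 0}. \<forall>y\<in>V. 0 \<le> ip m z (\<lambda>k. y k - x k)"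
proof -
  define D where "D = {(\<lambda>k. v k - u k) |v u. v \<in> V \<and> u \<in> U}"
  have "U \<noteq> {}"
    using U(3) by (auto simp: bcl_def dest: spec[of _ 1])
  have "D \<subseteq> blk m" "D \<noteq> {}"
    using U(1) V(1,3) \<open>U \<noteq> {}\<close> unfolding D_def blk_def by fastforce+
  moreover have "bconvex D"
    unfolding D_def using V(2) U(2) by (rule bconvex_differences)
  moreover have "(\<lambda>k. 0) \<notin> D"
  proof
    assume "(\<lambda>k. 0) \<in> D"
    then obtain v u where "v \<in> V" "u \<in> U" "(\<lambda>k. 0) = (\<lambda>k. v k - u k)"
      unfolding D_def by blast
    then have "v = u"
      by (metis (no_types) eq_iff_diff_eq_0 ext)
    then show False
      using disjoint \<open>v \<in> V\<close> \<open>u \<in> U\<close> by blast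
  qed
  ultimately obtain z where z: "z \<in> blk m" "z \<noteq> (\<lambda>k. 0)" "\<forall>c\<in>D. 0 \<le> ip m z c"
    using bconvex_dual_vector by blast
  have separates: "ip m z u \<le> ip m z v" if "v \<in> V" "u \<in> U" for u v
    using z(3) that unfolding D_def by (force simp: ip_diff_right)
  have "z \<in> ncone m U x"
    using z(1) separates[OF V(3)] \<open>U \<noteq> {}\<close> by (simp add: ncone_def ip_diff_right)
  moreover have "ip m z x \<le> ip m z v" if "v \<in> V" for v
    using U(3) separates[OF that] by (rule ip_bounded_on_bcl)
  ultimately show ?thesis
    using z(2) by (auto simp: ip_diff_right)
qed

theorem theorem2:
  fixes I :: "'i set" and nd :: "'i \<Rightarrow> nat"
    and X :: "'i \<Rightarrow> (nat \<Rightarrow> real) set"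
    and P :: "'i \<Rightarrow> ('i \<Rightarrow> nat \<Rightarrow> real) \<Rightarrow> ('i \<Rightarrow> nat \<Rightarrow> real) \<Rightarrow> bool"
    and K :: "'i \<Rightarrow> ('i \<Rightarrow> nat \<Rightarrow> real) \<Rightarrow> (nat \<Rightarrow> real) set"
    and xh :: "'i \<Rightarrow> nat \<Rightarrow> real"
  assumes finI: "finite I"
    and X_sub: "\<forall>\<nu>\<in>I. X \<nu> \<subseteq> blk (nd \<nu>)"
    and K_dep: "\<forall>\<nu>\<in>I. \<forall>x v. K \<nu> (x(\<nu> := v)) = K \<nu> x"
    and K_maps: "\<forall>\<nu>\<in>I. \<forall>w\<in>Xminus I nd X \<nu>. K \<nu> w \<subseteq> X \<nu>"
    and K_vals: "\<forall>\<nu>\<in>I. \<forall>w\<in>Xminus I nd X \<nu>.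
                   K \<nu> w \<noteq> {} \<and> bclosed (nd \<nu>) (K \<nu> w) \<and> bconvex (K \<nu> w)"
    and U_conv: "\<forall>\<nu>\<in>I. \<forall>x\<in>prof I nd. bconvex (Us nd P \<nu> x)"
    and U_cl: "\<forall>\<nu>\<in>I. \<forall>x\<in>prof I nd. x \<nu> \<in> bcl (nd \<nu>) (Us nd P \<nu> x)"
    and gne: "is_GNE I nd X P K xh"
  shows "xh \<in> Kprod I nd K xh \<and>
         (\<exists>xs\<in>N0 I nd P xh. \<forall>y\<in>Kprod I nd K xh.
              pip I nd xs (\<lambda>\<nu> k. y \<nu> k - xh \<nu> k) \<ge> 0)"
proof -
  have xh_K: "xh \<in> Kprod I nd K xh"
    using gne by (simp add: is_GNE_def)
  have "\<exists>z\<in>Nnu nd P \<nu> xh - {\<lambda>k. 0}. \<forall>y\<in>K \<nu> xh. 0 \<le> ip (nd \<nu>) z (\<lambda>k. y k - xh \<nu> k)"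
    if "\<nu> \<in> I" for \<nu>
  proof -
    have xh_X: "xh \<in> Xminus I nd X \<nu>"
      using gne that by (simp add: is_GNE_def)
    then have "xh \<in> prof I nd"
      by (simp add: Xminus_def)
    moreover have "K \<nu> xh \<subseteq> blk (nd \<nu>)"
      using K_maps X_sub that xh_X by blast
    ultimately show ?thesis
      unfolding Nnu_def using that xh_X xh_K K_vals U_conv U_cl gne
      by (intro normal_vector_separating_closure_point)
        (auto simp: Us_def Kprod_def is_GNE_def)
  qed
  then obtain f where f: "\<And>\<nu>. \<nu> \<in> I \<Longrightarrow> f \<nu> \<in> Nnu nd P \<nu> xh - {\<lambda>k. 0} \<and>
      (\<forall>y\<in>K \<nu> xh. 0 \<le> ip (nd \<nu>) (f \<nu>) (\<lambda>k. y k - xh \<nu> k))"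
    by metis
  define xs where "xs = (\<lambda>\<nu>. if \<nu> \<in> I then f \<nu> else (\<lambda>k. 0))"
  have "xs \<in> N0 I nd P xh"
    using f ncone_subset_blk by (fastforce simp: N0_def prof_def xs_def Nnu_def)
  moreover have "pip I nd xs (\<lambda>\<nu> k. y \<nu> k - xh \<nu> k) \<ge> 0" if "y \<in> Kprod I nd K xh" for y
    unfolding pip_def using f that by (intro sum_nonneg) (simp add: xs_def Kprod_def)
  ultimately show ?thesis
    using xh_K by blast
qed

end
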